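(* Let $W$ be a (1-safe) DAW-net. For every state $(M,\eta)$ of $W$ and every guard $\Phi$ over the data model of $W$ (for which the translation $[\Phi]$ is defined), $$\mathcal{D},\eta\models\Phi\quad\text{iff}\quad\Psi(M,\eta)\models[\Phi].$$
   Context: Data model $\mathcal{D}=(\mathcal{V},\Delta,\mathrm{dm},\mathrm{ord})$: variables $\mathcal{V}$; domains $\Delta=\{\Delta_1,\dots,\Delta_n\}$ (not necessarily disjoint), $\mathrm{dm}:\mathcal{V}\to\Delta$ total surjective giving each variable its finite domain; $\mathrm{ord}$ a partial function giving partial orders $\le_{\Delta_i}$ on some domains. Assignments: partial functions $\eta$ with $\eta(v)\in\mathrm{dm}(v)$. Guards: $\Phi::=\mathit{true}\mid\mathrm{def}(v)\mid t_1=t_2\mid t_1\le t_2\mid\neg\Phi\mid\Phi\wedge\Phi$, $t_i\in\mathcal{V}\cup\bigcup_i\Delta_i$. With $t[\eta]=\eta(t)$ if $t$ is a variable on which $\eta$ is defined and $t$ otherwise: $\mathcal{D},\eta\models\mathrm{def}(v)$ iff $\eta(v)$ defined; $t_1=t_2$ iff $t_1[\eta],t_2[\eta]$ are constants and equal; $t_1\le t_2$ iff $t_1[\eta],t_2[\eta]\in\Delta_i$ for some $i$ with $\mathrm{ord}(\Delta_i)$ defined and $t_1[\eta]\le_{\Delta_i}t_2[\eta]$; $\mathit{true}$, $\neg$, $\wedge$ as usual. A DAW-net $W=\langle\mathcal{D},(P,T,F),\mathrm{wr},\mathrm{gd}\rangle$ has a workflow Petri net with places $P$ and transitions $T$, for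 each $t$ a partial function $\mathrm{wr}(t)$ with $\mathrm{wr}(t)(v)\subseteq\mathrm{dm}(v)$ and a guard $\mathrm{gd}(t)$; a state is $(M,\eta)$ with $M:P\to\mathbb{N}$ a marking. $W$ is assumed 1-safe; $\mathcal{V}'$ is the finite set of variables appearing in $W$ (states considered have $\mathrm{dom}(\eta)\subseteq\mathcal{V}'$). Planning state: a function assigning to each $v\in\mathcal{V}'$ a value in $\mathrm{dm}(v)\cup\{\mathrm{null}\}$ ($\mathrm{null}$ a fresh constant) and to each $p\in P$ a value in $\{\mathrm{true},\mathrm{false}\}$. $\Psi(M,\eta)$ maps $v\mapsto\eta(v)$ if defined, $v\mapsto\mathrm{null}$ otherwise, and $p\mapsto\mathrm{true}$ if $M(p)>0$, $p\mapsto\mathrm{false}$ if $M(p)=0$. The rigid relation $\mathrm{ord}=\bigcup_i\{(o,o')\in\Delta_i^2\mid o\le_{\Delta_i}o'\}$ (over domains with $\mathrm{ord}(\Delta_i)$ defined). Preconditions are Boolean combinations of $\mathrm{true}$, equalities $z_1=z_2$ and $\mathrm{ord}(z_1,z_2)$ where $z_j$ are constants or state variables; a state $s$ satisfies them after replacing each state variable $x$ by $s(x)$ (equality being identity, $\mathrm{ord}(a,b)$ membership). The translation $[\cdot]$: $[\mathit{true}]=\mathrm{true}$; $[\mathrm{def}(v)]=\neg(v=\mathrm{null})$; $[v=t_2]=\neg(v=\mathrm{null})\wedge(v=t_2)$; $[t_1\le t_2]=\mathrm{ord}(t_1,t_2)$; $[\neg\Phi]=\neg[\Phi]$; $[\Phi_1\wedge\Phi_2]=[\Phi_1]\wedge[\Phi_2]$.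 *)

theory Defs
  imports Main
begin

record ('v, 'c) data_model =
  dvars :: "'v set"
  doms  :: "'c set set"
  dm    :: "'v \<Rightarrow> 'c set"
  dord  :: "'c set \<Rightarrow> ('c \<times> 'c) set option"

definition wf_data_model :: "('v, 'c) data_model \<Rightarrow> bool" where
  "wf_data_model D \<longleftrightarrow>
     finite (doms D) \<and>
     dm D ` dvars D = doms D \<and>
     (\<forall>d \<in> doms D. finite d) \<and>
     (\<forall>d R. dord D d = Some R \<longrightarrow> d \<in> doms D \<and> partial_order_on d R)"

definition assignment :: "('v, 'c) data_model \<Rightarrow> ('v \<Rightarrow> 'c option) \<Rightarrow> bool" where
  "assignment D \<eta> \<longleftrightarrow> dom \<eta> \<subseteq> dvars D \<and> (\<forall>v c. \<eta> v = Some c \<longrightarrow> c \<in> dm D v)"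

datatype ('v, 'c) gterm = Var 'v | Const 'c

datatype ('v, 'c) guard =
    GTrue
  | GDef 'v
  | GEq "('v, 'c) gterm" "('v, 'c) gterm"
  | GLeq "('v, 'c) gterm" "('v, 'c) gterm"
  | GNeg "('v, 'c) guard"
  | GConj "('v, 'c) guard" "('v, 'c) guard"

fun gterm_vars :: "('v, 'c) gterm \<Rightarrow> 'v set" where
  "gterm_vars (Var v) = {v}"
| "gterm_vars (Const c) = {}"

fun gterm_consts :: "('v, 'c) gterm \<Rightarrow> 'c set" where
  "gterm_consts (Var v) = {}"
| "gterm_consts (Const c) = {c}"

fun guard_vars :: "('v, 'c) guard \<Rightarrow> 'v set" where
  "guard_vars GTrue = {}"
| "guard_vars (GDef v) = {v}"
| "guard_vars (GEq t1 t2) = gterm_vars t1 \<union> gterm_vars t2"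
| "guard_vars (GLeq t1 t2) = gterm_vars t1 \<union> gterm_vars t2"
| "guard_vars (GNeg g) = guard_vars g"
| "guard_vars (GConj g1 g2) = guard_vars g1 \<union> guard_vars g2"

fun guard_consts :: "('v, 'c) guard \<Rightarrow> 'c set" where
  "guard_consts GTrue = {}"
| "guard_consts (GDef v) = {}"
| "guard_consts (GEq t1 t2) = gterm_consts t1 \<union> gterm_consts t2"
| "guard_consts (GLeq t1 t2) = gterm_consts t1 \<union> gterm_consts t2"
| "guard_consts (GNeg g) = guard_consts g"
| "guard_consts (GConj g1 g2) = guard_consts g1 \<union> guard_consts g2"

definition guard_over :: "('v, 'c) data_model \<Rightarrow> ('v, 'c) guard \<Rightarrow> bool" where
  "guard_over D g \<longleftrightarrow> guard_vars g \<subseteq> dvars D \<and> guard_consts g \<subseteq> \<Union> (doms D)"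

fun gterm_inst :: "('v \<Rightarrow> 'c option) \<Rightarrow> ('v, 'c) gterm \<Rightarrow> ('v, 'c) gterm" where
  "gterm_inst \<eta> (Var v) = (case \<eta> v of Some c \<Rightarrow> Const c | None \<Rightarrow> Var v)"
| "gterm_inst \<eta> (Const c) = Const c"

fun guard_sat :: "('v, 'c) data_model \<Rightarrow> ('v \<Rightarrow> 'c option) \<Rightarrow> ('v, 'c) guard \<Rightarrow> bool" where
  "guard_sat D \<eta> GTrue = True"
| "guard_sat D \<eta> (GDef v) = (\<eta> v \<noteq> None)"
| "guard_sat D \<eta> (GEq t1 t2) =
     (\<exists>c1 c2. gterm_inst \<eta> t1 = Const c1 \<and> gterm_inst \<eta> t2 = Const c2 \<and> c1 = c2)"
| "guard_sat D \<eta> (GLeq t1 t2) =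
     (\<exists>c1 c2 d R. gterm_inst \<eta> t1 = Const c1 \<and> gterm_inst \<eta> t2 = Const c2 \<and>
        d \<in> doms D \<and> c1 \<in> d \<and> c2 \<in> d \<and> dord D d = Some R \<and> (c1, c2) \<in> R)"
| "guard_sat D \<eta> (GNeg g) = (\<not> guard_sat D \<eta> g)"
| "guard_sat D \<eta> (GConj g1 g2) = (guard_sat D \<eta> g1 \<and> guard_sat D \<eta> g2)"

record ('v, 'c, 'p, 't) dawnet =
  dmodel :: "('v, 'c) data_model"
  places :: "'p set"
  trans  :: "'t set"
  flow_in  :: "('p \<times> 't) set"
  flow_out :: "('t \<times> 'p) set"
  wr :: "'t \<Rightarrow> 'v \<Rightarrow> 'c set option"
  gd :: "'t \<Rightarrow> ('v, 'c) guard"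

definition flow_graph :: "('v, 'c, 'p, 't) dawnet \<Rightarrow> ('p + 't) rel" where
  "flow_graph W = {(Inl p, Inr t) | p t. (p, t) \<in> flow_in W} \<union>
                  {(Inr t, Inl p) | p t. (t, p) \<in> flow_out W}"

definition workflow_net :: "('v, 'c, 'p, 't) dawnet \<Rightarrow> 'p \<Rightarrow> 'p \<Rightarrow> bool" where
  "workflow_net W i f \<longleftrightarrow>
     finite (places W) \<and> finite (trans W) \<and>
     flow_in W \<subseteq> places W \<times> trans W \<and> flow_out W \<subseteq> trans W \<times> places W \<and>
     i \<in> places W \<and> f \<in> places W \<and>
     (\<forall>t. (t, i) \<notin> flow_out W) \<and> (\<forall>t. (f, t) \<notin> flow_in W) \<and>
     (\<forall>x \<in> Inl ` places W \<union> Inr ` trans W.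
        (Inl i, x) \<in> (flow_graph W)\<^sup>* \<and> (x, Inl f) \<in> (flow_graph W)\<^sup>*)"

definition preset :: "('v, 'c, 'p, 't) dawnet \<Rightarrow> 't \<Rightarrow> 'p set" where
  "preset W t = {p. (p, t) \<in> flow_in W}"

definition postset :: "('v, 'c, 'p, 't) dawnet \<Rightarrow> 't \<Rightarrow> 'p set" where
  "postset W t = {p. (t, p) \<in> flow_out W}"

definition net_vars :: "('v, 'c, 'p, 't) dawnet \<Rightarrow> 'v set" where
  "net_vars W = (\<Union>t \<in> trans W. dom (wr W t) \<union> guard_vars (gd W t))"

definition wf_dawnet :: "('v, 'c, 'p, 't) dawnet \<Rightarrow> bool" where
  "wf_dawnet W \<longleftrightarrow> wf_data_model (dmodel W) \<and> (\<exists>i f. workflow_net W i f) \<and>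
     (\<forall>t \<in> trans W. \<forall>v S. wr W t v = Some S \<longrightarrow> v \<in> dvars (dmodel W) \<and> S \<subseteq> dm (dmodel W) v) \<and>
     (\<forall>t \<in> trans W. guard_over (dmodel W) (gd W t))"

definition fires ::
  "('v, 'c, 'p, 't) dawnet \<Rightarrow> ('p \<Rightarrow> nat) \<times> ('v \<Rightarrow> 'c option) \<Rightarrow> 't \<Rightarrow>
   ('p \<Rightarrow> nat) \<times> ('v \<Rightarrow> 'c option) \<Rightarrow> bool" where
  "fires W s t s' \<longleftrightarrow> (case s of (M, \<eta>) \<Rightarrow> case s' of (M', \<eta>') \<Rightarrow>
     t \<in> trans W \<and> (\<forall>p \<in> preset W t. M p > 0) \<and> guard_sat (dmodel W) \<eta> (gd W t) \<and>
     (\<forall>p. M' p = M p - (if p \<in> preset W t then 1 else 0) + (if p \<in> postset W t then 1 else 0)) \<and>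
     (\<forall>v. case wr W t v of
            None \<Rightarrow> \<eta>' v = \<eta> v
          | Some S \<Rightarrow> (if S = {} then \<eta>' v = None else (\<exists>c \<in> S. \<eta>' v = Some c))))"

inductive reachable :: "('v, 'c, 'p, 't) dawnet \<Rightarrow> 'p \<Rightarrow>
   ('p \<Rightarrow> nat) \<times> ('v \<Rightarrow> 'c option) \<Rightarrow> bool" for W i where
  init: "reachable W i ((\<lambda>p. if p = i then 1 else 0), Map.empty)"
| step: "reachable W i s \<Longrightarrow> fires W s t s' \<Longrightarrow> reachable W i s'"

definition one_safe :: "('v, 'c, 'p, 't) dawnet \<Rightarrow> bool" where
  "one_safe W \<longleftrightarrow> (\<forall>i f. workflow_net W i f \<longrightarrow>
     (\<forall>M \<eta>. reachable W i (M, \<eta>) \<longrightarrow> (\<forall>p. M p \<le> 1)))"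

definition dawnet_state :: "('v, 'c, 'p, 't) dawnet \<Rightarrow> ('p \<Rightarrow> nat) \<Rightarrow> ('v \<Rightarrow> 'c option) \<Rightarrow> bool" where
  "dawnet_state W M \<eta> \<longleftrightarrow> assignment (dmodel W) \<eta> \<and> dom \<eta> \<subseteq> net_vars W"

datatype ('v, 'p) svar = SVar 'v | SPlace 'p
datatype 'c pval = PConst 'c | Null | PBool bool

datatype ('v, 'p, 'c) pterm = PVar "('v, 'p) svar" | PC "'c pval"

datatype ('v, 'p, 'c) precond =
    PTrue
  | PEq "('v, 'p, 'c) pterm" "('v, 'p, 'c) pterm"
  | POrd "('v, 'p, 'c) pterm" "('v, 'p, 'c) pterm"
  | PNeg "('v, 'p, 'c) precond"
  | PConj "('v, 'p, 'c) precond" "('v, 'p, 'c) precond"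

definition planning_state_of ::
  "('p \<Rightarrow> nat) \<Rightarrow> ('v \<Rightarrow> 'c option) \<Rightarrow> ('v, 'p) svar \<Rightarrow> 'c pval" ("\<Psi>") where
  "\<Psi> M \<eta> x = (case x of
       SVar v \<Rightarrow> (case \<eta> v of Some c \<Rightarrow> PConst c | None \<Rightarrow> Null)
     | SPlace p \<Rightarrow> PBool (M p > 0))"

definition rigid_ord :: "('v, 'c) data_model \<Rightarrow> ('c pval \<times> 'c pval) set" where
  "rigid_ord D = (\<Union>d \<in> doms D. case dord D d of None \<Rightarrow> {}
                     | Some R \<Rightarrow> {(PConst o1, PConst o2) | o1 o2. o1 \<in> d \<and> o2 \<in> d \<and> (o1, o2) \<in> R})"

fun pterm_eval :: "(('v, 'p) svar \<Rightarrow> 'c pval) \<Rightarrow> ('v, 'p, 'c) pterm \<Rightarrow> 'c pval" where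
  "pterm_eval s (PVar x) = s x"
| "pterm_eval s (PC a) = a"

fun precond_sat :: "('v, 'c) data_model \<Rightarrow> (('v, 'p) svar \<Rightarrow> 'c pval) \<Rightarrow> ('v, 'p, 'c) precond \<Rightarrow> bool" where
  "precond_sat D s PTrue = True"
| "precond_sat D s (PEq z1 z2) = (pterm_eval s z1 = pterm_eval s z2)"
| "precond_sat D s (POrd z1 z2) = ((pterm_eval s z1, pterm_eval s z2) \<in> rigid_ord D)"
| "precond_sat D s (PNeg P) = (\<not> precond_sat D s P)"
| "precond_sat D s (PConj P1 P2) = (precond_sat D s P1 \<and> precond_sat D s P2)"

fun tr_term :: "('v, 'c) gterm \<Rightarrow> ('v, 'p, 'c) pterm" where
  "tr_term (Var v) = PVar (SVar v)"
| "tr_term (Const c) = PC (PConst c)"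

fun translate :: "('v, 'c) guard \<Rightarrow> ('v, 'p, 'c) precond option" where
  "translate GTrue = Some PTrue"
| "translate (GDef v) = Some (PNeg (PEq (PVar (SVar v)) (PC Null)))"
| "translate (GEq (Var v) t2) =
     Some (PConj (PNeg (PEq (PVar (SVar v)) (PC Null))) (PEq (PVar (SVar v)) (tr_term t2)))"
| "translate (GEq (Const c) t2) = None"
| "translate (GLeq t1 t2) = Some (POrd (tr_term t1) (tr_term t2))"
| "translate (GNeg g) = map_option PNeg (translate g)"
| "translate (GConj g1 g2) =
     (case (translate g1, translate g2) of
        (Some P1, Some P2) \<Rightarrow> Some (PConj P1 P2)
      | _ \<Rightarrow> None)"

end

theory Submission
  imports Defs
begin

text \<open>A variable
  term evaluates to the constant it is bound to under \<open>\<eta>\<close> and to \<open>Null\<close> otherwise, so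
  equality and ordering atoms only differ where an undefined variable is involved.  For
  the ordering this cannot happen, since \<open>rigid_ord\<close> relates constants only; for
  equality the extra conjunct \<open>\<not> v = null\<close> excludes it.\<close>

lemma pterm_eval_tr_term:
  "pterm_eval (\<Psi> M \<eta>) (tr_term t) =
     (case gterm_inst \<eta> t of Const c \<Rightarrow> PConst c | Var v \<Rightarrow> Null)"
  by (cases t) (auto simp: planning_state_of_def split: option.split)

lemma pterm_eval_tr_term_eq_PConst_iff:
  "pterm_eval (\<Psi> M \<eta>) (tr_term t) = PConst c \<longleftrightarrow> gterm_inst \<eta> t = Const c"
  by (simp add: pterm_eval_tr_term split: gterm.split)

lemma in_rigid_ord_iff:
  "(a, b) \<in> rigid_ord D \<longleftrightarrow> (\<exists>c1 c2 d R. a = PConst c1 \<and> b = PConst c2 \<and>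
      d \<in> doms D \<and> c1 \<in> d \<and> c2 \<in> d \<and> dord D d = Some R \<and> (c1, c2) \<in> R)"
  unfolding rigid_ord_def by (auto split: option.splits) blast+

lemma guard_sat_iff_precond_sat_translate:
  assumes "translate \<Phi> = Some P"
  shows "guard_sat D \<eta> \<Phi> \<longleftrightarrow> precond_sat D (\<Psi> M \<eta>) P"
  using assms
proof (induction \<Phi> arbitrary: P)
  case GTrue
  then show ?case by simp
next
  case (GDef v)
  then show ?case by (auto simp: planning_state_of_def split: option.splits)
next
  case (GEq t1 t2)
  then obtain v where t1: "t1 = Var v"
    by (cases t1) auto
  let ?x = "pterm_eval (\<Psi> M \<eta>) (tr_term t1)"
  and ?y = "pterm_eval (\<Psi> M \<eta>) (tr_term t2)"
  from GEq.prems t1 have "precond_sat D (\<Psi> M \<eta>) P \<longleftrightarrow> ?x \<noteq> Null \<and> ?x = ?y"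
    by auto
  also have "\<dots> \<longleftrightarrow> guard_sat D \<eta> (GEq t1 t2)"
    by (auto simp: pterm_eval_tr_term split: gterm.split)
  finally show ?case ..
next
  case (GLeq t1 t2)
  then have "P = POrd (tr_term t1) (tr_term t2)"
    by simp
  then show ?case
    by (simp add: in_rigid_ord_iff pterm_eval_tr_term_eq_PConst_iff)
next
  case (GNeg g)
  then obtain Q where "translate g = Some Q" and "P = PNeg Q"
    by auto
  with GNeg.IH show ?case by simp
next
  case (GConj g1 g2)
  then obtain P1 P2 where "translate g1 = Some P1" and "translate g2 = Some P2"
    and "P = PConj P1 P2"
    by (auto split: option.splits)
  with GConj.IH show ?case by simp
qed

theorem mainTheorem7:
  fixes W :: "('v, 'c, 'p, 't) dawnet"
    and M :: "'p \<Rightarrow> nat" and \<eta> :: "'v \<Rightarrow> 'c option"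
    and \<Phi> :: "('v, 'c) guard" and P :: "('v, 'p, 'c) precond"
  assumes "wf_dawnet W" and "one_safe W"
    and "dawnet_state W M \<eta>"
    and "guard_over (dmodel W) \<Phi>" and "guard_vars \<Phi> \<subseteq> net_vars W"
    and "translate \<Phi> = Some P"
  shows "guard_sat (dmodel W) \<eta> \<Phi> \<longleftrightarrow> precond_sat (dmodel W) (\<Psi> M \<eta>) P"
  using guard_sat_iff_precond_sat_translate[OF \<open>translate \<Phi> = Some P\<close>] .

end
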